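(* Let $\Gamma$ be a discrete group, $N$ a normal subgroup with finite quotient $\tilde\Gamma=\Gamma/N$, $r\ge1$, and $f=\sum_\gamma a_\gamma\gamma\in M_r(\mathbb{Z}\Gamma)$ with image $\tilde f=\sum_\gamma a_\gamma\tilde\gamma\in M_r(\mathbb{Z}\tilde\Gamma)$. Then $\rho_{\tilde f}$ is an automorphism of $(\mathbb{Q}\tilde\Gamma)^r$ if and only if $\mathrm{Fix}_N(X_f)$ is finite, and in this case $|\mathrm{Fix}_N(X_f)|=\pm\det\rho_{\tilde f}$.
   Context: $T=(\mathbb{R}/\mathbb{Z})^r$. For $f=\sum_\gamma a_\gamma\gamma$ with $a_\gamma\in M_r(\mathbb{Z})$ (almost all zero), $X_f\subset T^\Gamma$ is the closed subgroup of all $(x_{\gamma'})$ (entries as row vectors) with $\sum_{\gamma'}x_{\gamma'}a^T_{\gamma^{-1}\gamma'}=0$ in $T$ for all $\gamma$, where $a^T$ is the transpose; $\Gamma$ acts by $\gamma\cdot(x_{\gamma'})=(x_{\gamma^{-1}\gamma'})$, and $\mathrm{Fix}_N(X_f)$ is the set of points fixed by every element of $N$. For a finite group $G$, a field $K\supseteq\mathbb{Q}$ and $h=\sum_g b_g g\in M_r(KG)$, set $h^*=\sum_g b^T_{g^{-1}}g$; $\rho_h$ is the $K$-linear endomorphism $x\mapsto xh^*$ of $(KG)^r$ (row vectors), and $\det\rho_h$ its determinant over $K$. *)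

theory Defs
  imports Complex_Main "HOL-Algebra.Coset" "HOL-Combinatorics.Permutations"
begin

text \<open>An element f = sum a_gamma gamma of M_r(Z Gamma) is given by a coefficient function
  a :: 'g => nat => nat => int (a gamma i j = (i,j)-entry of a_gamma, only i,j < r matter).\<close>

definition fsupp :: "('g, 'b) monoid_scheme \<Rightarrow> nat \<Rightarrow> ('g \<Rightarrow> nat \<Rightarrow> nat \<Rightarrow> int) \<Rightarrow> 'g set" where
  "fsupp G r a = {\<gamma> \<in> carrier G. \<exists>i<r. \<exists>j<r. a \<gamma> i j \<noteq> 0}"

text \<open>Points of T^Gamma, T = (R/Z)^r: each element of R/Z is represented by its unique
  representative in [0,1); x gamma i is the i-th coordinate of x_gamma (extensional).
  The equation sum x_gamma' a^T_{gamma^-1 gamma'} = 0 in T means: each coordinate of the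
  real sum lies in Z.\<close>

definition X_f :: "('g, 'b) monoid_scheme \<Rightarrow> nat \<Rightarrow> ('g \<Rightarrow> nat \<Rightarrow> nat \<Rightarrow> int) \<Rightarrow> ('g \<Rightarrow> nat \<Rightarrow> real) set" where
  "X_f G r a = {x.
     (\<forall>\<gamma> i. (\<gamma> \<in> carrier G \<and> i < r) \<longrightarrow> x \<gamma> i \<in> {0..<1}) \<and>
     (\<forall>\<gamma> i. \<not> (\<gamma> \<in> carrier G \<and> i < r) \<longrightarrow> x \<gamma> i = 0) \<and>
     (\<forall>\<gamma> \<in> carrier G. \<forall>i<r.
        (\<Sum>\<gamma>' \<in> {\<gamma>' \<in> carrier G. inv\<^bsub>G\<^esub> \<gamma> \<otimes>\<^bsub>G\<^esub> \<gamma>' \<in> fsupp G r a}.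
           \<Sum>j<r. x \<gamma>' j * of_int (a (inv\<^bsub>G\<^esub> \<gamma> \<otimes>\<^bsub>G\<^esub> \<gamma>') i j)) \<in> \<int>)}"

definition Fix_N :: "('g, 'b) monoid_scheme \<Rightarrow> 'g set \<Rightarrow> nat \<Rightarrow> ('g \<Rightarrow> nat \<Rightarrow> nat \<Rightarrow> int) \<Rightarrow> ('g \<Rightarrow> nat \<Rightarrow> real) set" where
  "Fix_N G N r a = {x \<in> X_f G r a. \<forall>n \<in> N. \<forall>\<gamma>' \<in> carrier G. x (inv\<^bsub>G\<^esub> n \<otimes>\<^bsub>G\<^esub> \<gamma>') = x \<gamma>'}"

definition ftilde :: "('g, 'b) monoid_scheme \<Rightarrow> nat \<Rightarrow> ('g \<Rightarrow> nat \<Rightarrow> nat \<Rightarrow> int) \<Rightarrow> 'g set \<Rightarrow> nat \<Rightarrow> nat \<Rightarrow> int" where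
  "ftilde G r a c i j = (\<Sum>\<gamma> \<in> c \<inter> fsupp G r a. a \<gamma> i j)"

text \<open>(Q (G/N))^r as extensional functions on (G/N) x {0..<r}; v (g, j) is the coefficient of g
  in the j-th coordinate.\<close>

definition QGr :: "('g, 'b) monoid_scheme \<Rightarrow> 'g set \<Rightarrow> nat \<Rightarrow> ('g set \<times> nat \<Rightarrow> rat) set" where
  "QGr G N r = {v. \<forall>k. k \<notin> carrier (G Mod N) \<times> {..<r} \<longrightarrow> v k = 0}"

text \<open>rho_h : x |-> x h^* with h = sum_g b_g g, h^* = sum_g b_{g^-1}^T g.
  (x h^*)_i has coefficient at m equal to sum_j sum_g x_j(g) * b_{m^-1 g}(i,j).\<close>

definition rho :: "('g, 'b) monoid_scheme \<Rightarrow> 'g set \<Rightarrow> nat \<Rightarrow> ('g set \<Rightarrow> nat \<Rightarrow> nat \<Rightarrow> int)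
     \<Rightarrow> ('g set \<times> nat \<Rightarrow> rat) \<Rightarrow> ('g set \<times> nat \<Rightarrow> rat)" where
  "rho G N r b v = (\<lambda>(m, i). if m \<in> carrier (G Mod N) \<and> i < r then
      (\<Sum>j<r. \<Sum>g \<in> carrier (G Mod N).
          v (g, j) * of_int (b (inv\<^bsub>G Mod N\<^esub> m \<otimes>\<^bsub>G Mod N\<^esub> g) i j))
     else 0)"

definition leibniz_det :: "'i set \<Rightarrow> ('i \<Rightarrow> 'i \<Rightarrow> 'a::comm_ring_1) \<Rightarrow> 'a" where
  "leibniz_det I M = (\<Sum>p \<in> {p. p permutes I}. of_int (sign p) * (\<Prod>k\<in>I. M k (p k)))"

text \<open>Determinant of a linear endomorphism of the space of functions I => K (extensional on I):
  the determinant of its matrix in the standard basis (delta_k), row k = image of delta_k.\<close>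

definition lin_det :: "'i set \<Rightarrow> (('i \<Rightarrow> 'a::comm_ring_1) \<Rightarrow> ('i \<Rightarrow> 'a)) \<Rightarrow> 'a" where
  "lin_det I \<phi> = leibniz_det I (\<lambda>k l. \<phi> (\<lambda>x. if x = k then 1 else 0) l)"

end

theory Submission
  imports Defs "Jordan_Normal_Form.Determinant"
begin

(* An N-invariant point of T^Gamma is constant on the cosets of N, so it is a point of the
   finite-dimensional torus (R/Z)^(Gamma/N x r), and the equations defining X_f become the
   equations of the integer matrix K of f~ acting on that torus.  Thus Fix_N(X_f) is the kernel
   of K on the torus.  Adding an integer multiple of one row to another changes neither that
   kernel nor det K, so Euclid's algorithm on the first column reduces to a matrix whose first
   column is (d, 0, ..., 0); its kernel fibres over the kernel of the minor, with |d| points in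
   each fibre.  By induction the kernel is finite iff det K <> 0, and then has |det K| points.
   On the other side, rho_f~ acts on (Q(Gamma/N))^r through the same matrix K, so
   det rho_f~ = det K and rho_f~ is invertible iff det K <> 0. *)

section \<open>Points of a torus annihilated by an integer matrix\<close>

definition torus_kernel :: "'i set \<Rightarrow> ('i \<Rightarrow> 'i \<Rightarrow> int) \<Rightarrow> ('i \<Rightarrow> real) set" where
  "torus_kernel I K = {y. (\<forall>k. k \<notin> I \<longrightarrow> y k = 0) \<and> (\<forall>k\<in>I. 0 \<le> y k \<and> y k < 1) \<and>
     (\<forall>l\<in>I. (\<Sum>k\<in>I. of_int (K l k) * y k) \<in> \<int>)}"

abbreviation mat_torus_kernel :: "nat \<Rightarrow> int mat \<Rightarrow> (nat \<Rightarrow> real) set" where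
  "mat_torus_kernel n M \<equiv> torus_kernel {..<n} (\<lambda>l k. M $$ (l, k))"

lemma torus_kernel_cong:
  assumes "\<And>l k. l \<in> I \<Longrightarrow> k \<in> I \<Longrightarrow> K l k = K' l k"
  shows "torus_kernel I K = torus_kernel I K'"
  unfolding torus_kernel_def using assms by (auto cong: sum.cong)

lemma card_unit_interval_affine_Ints:
  fixes d :: int and c :: real
  assumes "d \<noteq> 0"
  shows "card {t. 0 \<le> t \<and> t < 1 \<and> of_int d * t + c \<in> \<int>} = nat \<bar>d\<bar>"
proof -
  have pos: "card {t. 0 \<le> t \<and> t < 1 \<and> of_int d * t + c \<in> \<int>} = nat d"
    if "d > 0" for d :: int and c :: real
  proof -
    \<comment> \<open>the solutions are the numbers (z - c) / d for the d integers z in [c, c + d)\<close>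
    define Z where "Z = {\<lceil>c\<rceil> ..< \<lceil>c\<rceil> + d}"
    define h where "h = (\<lambda>z::int. (of_int z - c) / of_int d)"
    have d: "(of_int d :: real) > 0" using that by simp
    have "{t. 0 \<le> t \<and> t < 1 \<and> of_int d * t + c \<in> \<int>} = h ` Z"
    proof (intro equalityI subsetI)
      fix t assume "t \<in> {t. 0 \<le> t \<and> t < 1 \<and> of_int d * t + c \<in> \<int>}"
      then obtain z where t: "0 \<le> t" "t < 1" and z: "of_int d * t + c = of_int z"
        by (auto elim: Ints_cases)
      have "c \<le> of_int z" using z t d by (smt (verit) mult_nonneg_nonneg)
      moreover have "of_int z < c + of_int d" using z t d by (smt (verit) mult_less_cancel_left2)
      ultimately have "\<lceil>c\<rceil> \<le> z" "z - d < \<lceil>c\<rceil>"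
        by (simp_all add: ceiling_le_iff less_ceiling_iff)
      then have "z \<in> Z" unfolding Z_def by simp
      moreover have "t = h z" unfolding h_def using z d by (simp add: field_simps)
      ultimately show "t \<in> h ` Z" by blast
    next
      fix t assume "t \<in> h ` Z"
      then obtain z where "\<lceil>c\<rceil> \<le> z" "z - d < \<lceil>c\<rceil>" and t: "t = h z"
        unfolding Z_def by auto
      then have "c \<le> of_int z" "of_int (z - d) < c"
        by (simp_all add: ceiling_le_iff less_ceiling_iff)
      then have "0 \<le> t" "t < 1" using d unfolding t h_def by (simp_all add: field_simps)
      moreover have "of_int d * t + c = of_int z" using d unfolding t h_def by (simp add: field_simps)
      ultimately show "t \<in> {t. 0 \<le> t \<and> t < 1 \<and> of_int d * t + c \<in> \<int>}" by simp
    qed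
    moreover have "inj_on h Z" unfolding h_def inj_on_def using d by simp
    ultimately show ?thesis by (simp add: card_image Z_def)
  qed
  show ?thesis
  proof (cases "d > 0")
    case False
    have "of_int d * t + c \<in> \<int> \<longleftrightarrow> of_int (- d) * t + (- c) \<in> \<int>" for t
      using minus_in_Ints_iff[of "of_int d * t + c"] by simp
    then show ?thesis using pos[of "- d" "- c"] False assms by simp
  qed (simp add: pos)
qed

lemma mat_torus_kernel_addrow:
  assumes M: "M \<in> carrier_mat n n" and pq: "p < n" "q < n" "q \<noteq> p"
  shows "mat_torus_kernel n (addrow t q p M) = mat_torus_kernel n M"
proof -
  define s where "s = (\<lambda>M l (y::nat \<Rightarrow> real). \<Sum>k<n. of_int (M $$ (l, k)) * y k)"
  have s_addrow: "s (addrow t q p M) l y =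
      (if l = q then of_int t * s M p y + s M q y else s M l y)" if "l < n" for l y
    using M that unfolding s_def
    by (auto simp: sum_distrib_left sum.distrib[symmetric] algebra_simps intro!: sum.cong)
  have "(\<forall>l<n. s (addrow t q p M) l y \<in> \<int>) \<longleftrightarrow> (\<forall>l<n. s M l y \<in> \<int>)" for y
  proof
    assume H: "\<forall>l<n. s (addrow t q p M) l y \<in> \<int>"
    have "s M q y = s (addrow t q p M) q y - of_int t * s (addrow t q p M) p y"
      using s_addrow pq by simp
    also have "\<dots> \<in> \<int>" using H pq by simp
    finally have "s M q y \<in> \<int>" .
    show "\<forall>l<n. s M l y \<in> \<int>"
    proof (intro allI impI)
      fix l assume "l < n"
      then show "s M l y \<in> \<int>"
        using H s_addrow[OF \<open>l < n\<close>] \<open>s M q y \<in> \<int>\<close> by (cases "l = q") auto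
    qed
  next
    assume "\<forall>l<n. s M l y \<in> \<int>"
    then show "\<forall>l<n. s (addrow t q p M) l y \<in> \<int>" using s_addrow pq by simp
  qed
  then show ?thesis unfolding torus_kernel_def s_def by auto
qed

lemma mat_torus_kernel_zero_column:
  assumes M: "M \<in> carrier_mat n n" and "0 < n" and zero: "\<forall>i<n. M $$ (i, 0) = 0"
  shows "infinite (mat_torus_kernel n M)"
proof
  assume fin: "finite (mat_torus_kernel n M)"
  define h where "h = (\<lambda>t::real. \<lambda>k::nat. if k = 0 then t else 0)"
  have "(\<Sum>k<n. of_int (M $$ (l, k)) * h t k) = 0" if "l < n" for l t
    using \<open>0 < n\<close> zero that by (subst sum.remove[of _ 0]) (auto simp: h_def)
  then have "h ` {0..<1} \<subseteq> mat_torus_kernel n M"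
    using \<open>0 < n\<close> unfolding torus_kernel_def by (auto simp: h_def)
  moreover have "inj_on h {0..<1}" unfolding inj_on_def h_def by metis
  ultimately have "finite {0..<(1::real)}"
    using finite_imageD finite_subset fin by blast
  then show False using infinite_Ico[of "0::real" 1] by simp
qed

lemma det_pivot_first_column:
  assumes M: "M \<in> carrier_mat (Suc m) (Suc m)" and zero: "\<forall>i\<in>{1..m}. M $$ (i, 0) = 0"
  shows "det M = M $$ (0, 0) * det (mat_delete M 0 0)"
  using laplace_expansion_column[OF M, of 0] zero
  by (simp del: sum.lessThan_Suc add: sum.lessThan_Suc_shift cofactor_def)

lemma finite_card_Sigma_constant:
  assumes "\<And>a. a \<in> A \<Longrightarrow> card (B a) = d" and "d > 0"
  shows "finite (SIGMA a:A. B a) \<longleftrightarrow> finite A"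
    and "card (SIGMA a:A. B a) = d * card A"
proof -
  have B: "finite (B a)" "B a \<noteq> {}" if "a \<in> A" for a
    using assms that card_gt_0_iff[of "B a"] by simp_all
  show fin: "finite (SIGMA a:A. B a) \<longleftrightarrow> finite A"
  proof
    assume "finite (SIGMA a:A. B a)"
    then have "finite (fst ` (SIGMA a:A. B a))" by (rule finite_imageI)
    moreover have "fst ` (SIGMA a:A. B a) = A" using B(2) by force
    ultimately show "finite A" by simp
  qed (use B(1) in blast)
  show "card (SIGMA a:A. B a) = d * card A"
  proof (cases "finite A")
    case True
    then show ?thesis using B(1) assms(1) by simp
  qed (use fin in simp)
qed

lemma mat_torus_kernel_pivot_Sigma:
  assumes M: "M \<in> carrier_mat (Suc m) (Suc m)" and zero: "\<forall>i\<in>{1..m}. M $$ (i, 0) = 0"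
  shows "mat_torus_kernel (Suc m) M = (\<lambda>(y', t). case_nat t y') `
    (SIGMA y':mat_torus_kernel m (mat_delete M 0 0).
       {t. 0 \<le> t \<and> t < 1 \<and> of_int (M $$ (0, 0)) * t + (\<Sum>k<m. of_int (M $$ (0, Suc k)) * y' k) \<in> \<int>})"
    (is "_ = _ ` (SIGMA y':?S'. ?F y')")
proof -
  have row_shift: "(\<Sum>k<Suc m. of_int (M $$ (l, k)) * y k) =
      of_int (M $$ (l, 0)) * y 0 + (\<Sum>k<m. of_int (M $$ (l, Suc k)) * y (Suc k))"
    for l and y :: "nat \<Rightarrow> real"
    by (simp del: sum.lessThan_Suc add: sum.lessThan_Suc_shift)
  have minor_row: "(\<Sum>k<m. of_int (mat_delete M 0 0 $$ (l, k)) * y (Suc k)) =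
      (\<Sum>k<Suc m. of_int (M $$ (Suc l, k)) * y k)" if "l < m" for l and y :: "nat \<Rightarrow> real"
    using M zero that by (simp del: sum.lessThan_Suc add: row_shift mat_delete_def)
  show ?thesis
  proof (intro equalityI subsetI)
    fix y assume y: "y \<in> mat_torus_kernel (Suc m) M"
    define y' where "y' = (\<lambda>k. y (Suc k))"
    have "case_nat (y 0) y' = y" unfolding y'_def by (auto simp: fun_eq_iff split: nat.split)
    moreover have "y' \<in> ?S'"
      using y minor_row unfolding torus_kernel_def y'_def by (auto simp del: sum.lessThan_Suc)
    moreover have "(\<Sum>k<Suc m. of_int (M $$ (0, k)) * y k) \<in> \<int>"
      using y unfolding torus_kernel_def by blast
    then have "y 0 \<in> ?F y'"
      using y unfolding row_shift y'_def torus_kernel_def by (simp del: sum.lessThan_Suc)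
    ultimately show "y \<in> (\<lambda>(y', t). case_nat t y') ` (SIGMA y':?S'. ?F y')"
      by (auto intro!: image_eqI[where x = "(y', y 0)"])
  next
    fix y assume "y \<in> (\<lambda>(y', t). case_nat t y') ` (SIGMA y':?S'. ?F y')"
    then obtain p where p: "p \<in> (SIGMA y':?S'. ?F y')" and y: "y = (\<lambda>(y', t). case_nat t y') p"
      by (rule imageE)
    obtain y' t where p_eq: "p = (y', t)" by (cases p)
    have y': "y' \<in> ?S'" and t: "t \<in> ?F y'" using p unfolding p_eq by simp_all
    have y_simps: "y 0 = t" "y (Suc k) = y' k" for k unfolding y p_eq by simp_all
    have "(\<Sum>k<Suc m. of_int (M $$ (l, k)) * y k) \<in> \<int>" if "l < Suc m" for l
    proof (cases l)
      case 0
      then show ?thesis using t row_shift[of 0 y] unfolding y_simps by (simp del: sum.lessThan_Suc)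
    next
      case (Suc l')
      then have "l' < m" using that by simp
      then have "(\<Sum>k<m. of_int (mat_delete M 0 0 $$ (l', k)) * y' k) \<in> \<int>"
        using y' unfolding torus_kernel_def by blast
      then show ?thesis using minor_row[OF \<open>l' < m\<close>, of y] unfolding y_simps Suc by simp
    qed
    moreover have "y k = 0" if "Suc m \<le> k" for k
      using y' that y_simps(2)[of "k - 1"] unfolding torus_kernel_def by (cases k) auto
    moreover have "0 \<le> y k \<and> y k < 1" if "k < Suc m" for k
      using y' t y_simps unfolding torus_kernel_def by (cases k) auto
    ultimately show "y \<in> mat_torus_kernel (Suc m) M" unfolding torus_kernel_def by auto
  qed
qed

lemma mat_torus_kernel_pivot:
  assumes M: "M \<in> carrier_mat (Suc m) (Suc m)" and zero: "\<forall>i\<in>{1..m}. M $$ (i, 0) = 0"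
    and d: "M $$ (0, 0) \<noteq> 0"
  shows "finite (mat_torus_kernel (Suc m) M) \<longleftrightarrow> finite (mat_torus_kernel m (mat_delete M 0 0))"
    and "card (mat_torus_kernel (Suc m) M) = nat \<bar>M $$ (0, 0)\<bar> * card (mat_torus_kernel m (mat_delete M 0 0))"
proof -
  have inj: "inj_on (\<lambda>(y', t). case_nat t y') A" for A :: "((nat \<Rightarrow> real) \<times> real) set"
  proof (rule inj_onI, clarsimp)
    fix y' t z' u assume "case_nat t y' = case_nat u z'"
    from fun_cong[OF this, of 0] fun_cong[OF this, of "Suc k" for k]
    show "y' = z' \<and> t = u" by auto
  qed
  note Sigma = finite_card_Sigma_constant[OF card_unit_interval_affine_Ints[OF d]]
  show "finite (mat_torus_kernel (Suc m) M) \<longleftrightarrow> finite (mat_torus_kernel m (mat_delete M 0 0))"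
    using Sigma(1) d unfolding mat_torus_kernel_pivot_Sigma[OF M zero] finite_image_iff[OF inj] by simp
  show "card (mat_torus_kernel (Suc m) M) = nat \<bar>M $$ (0, 0)\<bar> * card (mat_torus_kernel m (mat_delete M 0 0))"
    using Sigma(2) d unfolding mat_torus_kernel_pivot_Sigma[OF M zero] card_image[OF inj] by simp
qed

lemma addrow_decreases_first_column:
  fixes M :: "int mat"
  assumes M: "M \<in> carrier_mat n n" and pq: "p < n" "q < n" "p \<noteq> q"
    and nonzero: "M $$ (p, 0) \<noteq> 0" "M $$ (q, 0) \<noteq> 0" and le: "\<bar>M $$ (p, 0)\<bar> \<le> \<bar>M $$ (q, 0)\<bar>"
  shows "(\<Sum>i<n. nat \<bar>addrow (- (M $$ (q, 0) div M $$ (p, 0))) q p M $$ (i, 0)\<bar>)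
       < (\<Sum>i<n. nat \<bar>M $$ (i, 0)\<bar>)"
proof -
  define M' where "M' = addrow (- (M $$ (q, 0) div M $$ (p, 0))) q p M"
  have M'_col: "M' $$ (i, 0) = (if i = q then M $$ (q, 0) mod M $$ (p, 0) else M $$ (i, 0))"
    if "i < n" for i
    using M pq that unfolding M'_def by (simp add: minus_div_mult_eq_mod[symmetric] algebra_simps)
  have split: "(\<Sum>i<n. nat \<bar>X $$ (i, 0)\<bar>) = nat \<bar>X $$ (q, 0)\<bar> + (\<Sum>i\<in>{..<n} - {q}. nat \<bar>X $$ (i, 0)\<bar>)"
    for X :: "int mat"
    using pq by (intro sum.remove) auto
  have "(\<Sum>i\<in>{..<n} - {q}. nat \<bar>M' $$ (i, 0)\<bar>) = (\<Sum>i\<in>{..<n} - {q}. nat \<bar>M $$ (i, 0)\<bar>)"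
    using M'_col by (intro sum.cong) auto
  moreover have "nat \<bar>M $$ (q, 0) mod M $$ (p, 0)\<bar> < nat \<bar>M $$ (q, 0)\<bar>"
    using abs_mod_less[OF nonzero(1), of "M $$ (q, 0)"] nonzero le by simp
  ultimately show ?thesis
    using split[of M] split[of M'] M'_col[of q] pq unfolding M'_def[symmetric] by simp
qed

text \<open>Euclid's algorithm on the first column, with the sum of the absolute values of its entries
  as termination measure.\<close>

lemma first_column_reduction_induct [consumes 1, case_names zero_column pivot addrow]:
  fixes M :: "int mat"
  assumes M: "M \<in> carrier_mat (Suc m) (Suc m)"
    and zero_column: "\<And>M. M \<in> carrier_mat (Suc m) (Suc m) \<Longrightarrow> \<forall>i<Suc m. M $$ (i, 0) = 0 \<Longrightarrow> P M"
    and pivot: "\<And>M. M \<in> carrier_mat (Suc m) (Suc m) \<Longrightarrow> \<forall>i\<in>{1..m}. M $$ (i, 0) = 0 \<Longrightarrow>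
      M $$ (0, 0) \<noteq> 0 \<Longrightarrow> P M"
    and addrow: "\<And>M t q p. M \<in> carrier_mat (Suc m) (Suc m) \<Longrightarrow> p < Suc m \<Longrightarrow> q < Suc m \<Longrightarrow>
      q \<noteq> p \<Longrightarrow> P (addrow t q p M) \<Longrightarrow> P M"
  shows "P M"
  using M
proof (induction "\<Sum>i<Suc m. nat \<bar>M $$ (i, 0)\<bar>" arbitrary: M rule: less_induct)
  case less
  note M = less.prems
  consider (two) p q where "p < Suc m" "q < Suc m" "p \<noteq> q" "M $$ (p, 0) \<noteq> 0" "M $$ (q, 0) \<noteq> 0"
      "\<bar>M $$ (p, 0)\<bar> \<le> \<bar>M $$ (q, 0)\<bar>"
    | (none) "\<forall>i<Suc m. M $$ (i, 0) = 0"
    | (one) p where "p < Suc m" "M $$ (p, 0) \<noteq> 0" "\<forall>i<Suc m. i \<noteq> p \<longrightarrow> M $$ (i, 0) = 0"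
    by (metis linorder_le_cases)
  then show ?case
  proof cases
    case two
    let ?M' = "addrow (- (M $$ (q, 0) div M $$ (p, 0))) q p M"
    have "?M' \<in> carrier_mat (Suc m) (Suc m)" using M by simp
    moreover have "(\<Sum>i<Suc m. nat \<bar>?M' $$ (i, 0)\<bar>) < (\<Sum>i<Suc m. nat \<bar>M $$ (i, 0)\<bar>)"
      by (rule addrow_decreases_first_column[OF M two])
    ultimately have "P ?M'" using less.hyps by blast
    then show ?thesis using addrow[OF M two(1,2) two(3)[symmetric]] by blast
  next
    case none
    then show ?thesis using zero_column[OF M] by simp
  next
    case one
    show ?thesis
    proof (cases "p = 0")
      case True
      then show ?thesis using pivot[OF M] one by auto
    next
      case False
      \<comment> \<open>move the only nonzero entry of the first column to the top\<close>
      define M1 where "M1 = addrow 1 0 p M"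
      define M2 where "M2 = addrow (- 1) p 0 M1"
      have M1: "M1 \<in> carrier_mat (Suc m) (Suc m)" using M unfolding M1_def by simp
      have M2: "M2 \<in> carrier_mat (Suc m) (Suc m)" using M1 unfolding M2_def by simp
      have M1_col: "M1 $$ (i, 0) = (if i = 0 then M $$ (p, 0) else M $$ (i, 0))" if "i < Suc m" for i
        using M that one False unfolding M1_def by simp
      have M2_col: "M2 $$ (i, 0) = (if i = p then 0 else M1 $$ (i, 0))" if "i < Suc m" for i
        using M1 that M1_col[of 0] M1_col[of p] one False unfolding M2_def by simp
      have "P M2"
        using pivot[OF M2] M2_col M1_col one False by auto
      then have "P M1" using addrow[OF M1 _ one(1) False] unfolding M2_def by simp
      then show ?thesis using addrow[OF M one(1) _ False[symmetric]] unfolding M1_def by simp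
    qed
  qed
qed

lemma mat_torus_kernel_card:
  assumes "M \<in> carrier_mat n n"
  shows "(finite (mat_torus_kernel n M) \<longleftrightarrow> det M \<noteq> 0) \<and> card (mat_torus_kernel n M) = nat \<bar>det M\<bar>"
  using assms
proof (induction n arbitrary: M)
  case 0
  then have "M = 1\<^sub>m 0" by (intro eq_matI) auto
  moreover have "mat_torus_kernel 0 M = {\<lambda>_. 0}" unfolding torus_kernel_def by auto
  ultimately show ?case by simp
next
  case (Suc m)
  from Suc.prems show ?case
  proof (induction M rule: first_column_reduction_induct)
    case (zero_column M)
    then show ?case
      using mat_torus_kernel_zero_column[of M "Suc m"] laplace_expansion_column[of M "Suc m" 0] by simp
  next
    case (pivot M)
    have "mat_delete M 0 0 \<in> carrier_mat m m" using mat_delete_carrier[OF pivot(1)] by simp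
    with Suc.IH pivot show ?case
      by (simp add: mat_torus_kernel_pivot det_pivot_first_column abs_mult nat_mult_distrib)
  next
    case (addrow M t q p)
    then show ?case by (simp add: mat_torus_kernel_addrow det_addrow)
  qed
qed

section \<open>Determinants of matrices indexed by finite sets\<close>

lemma leibniz_det_cong:
  assumes "\<And>k l. k \<in> I \<Longrightarrow> l \<in> I \<Longrightarrow> M k l = M' k l"
  shows "leibniz_det I M = leibniz_det I M'"
  unfolding leibniz_det_def using assms
  by (intro sum.cong refl arg_cong2[where f = "(*)"] prod.cong) (auto simp: permutes_in_image)

lemma leibniz_det_reindex:
  assumes e: "bij_betw e J I" and "finite J"
  shows "leibniz_det I M = leibniz_det J (\<lambda>i j. M (e i) (e j))"
proof -
  define e' where "e' = inv_into J e"
  have e': "bij_betw e' I J" unfolding e'_def using e by (rule bij_betw_inv_into)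
  have e'_e: "e' (e j) = j" if "j \<in> J" for j
    using e that unfolding e'_def by (meson bij_betw_inv_into_left)
  have e_e': "e (e' i) = i" if "i \<in> I" for i
    using e that unfolding e'_def by (meson bij_betw_inv_into_right)
  have "finite I" using e \<open>finite J\<close> bij_betw_finite by blast
  show ?thesis unfolding leibniz_det_def
  proof (rule sum.reindex_bij_witness[where i = "map_permutation J e" and j = "map_permutation I e'"])
    fix \<pi> assume "\<pi> \<in> {\<pi>. \<pi> permutes I}"
    then have \<pi>: "\<pi> permutes I" by simp
    show "map_permutation J e (map_permutation I e' \<pi>) = \<pi>"
      by (rule map_permutation_compose_inv[OF e' \<pi> e_e'])
    show "map_permutation I e' \<pi> \<in> {p. p permutes J}"
      using map_permutation_permutes[OF e' \<pi>] by simp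
    have inj: "inj_on e' I" using e' by (rule bij_betw_imp_inj_on)
    have "(\<Prod>j\<in>J. M (e j) (e (map_permutation I e' \<pi> j))) =
        (\<Prod>i\<in>I. M (e (e' i)) (e (map_permutation I e' \<pi> (e' i))))"
      by (rule prod.reindex_bij_betw[OF e', symmetric])
    also have "\<dots> = (\<Prod>i\<in>I. M i (\<pi> i))"
      using e_e' permutes_in_image[OF \<pi>] by (intro prod.cong) (simp_all add: map_permutation_apply[OF inj])
    finally show "of_int (sign (map_permutation I e' \<pi>)) *
        (\<Prod>j\<in>J. M (e j) (e (map_permutation I e' \<pi> j))) = of_int (sign \<pi>) * (\<Prod>i\<in>I. M i (\<pi> i))"
      using sign_map_permutation[OF inj \<pi> \<open>finite I\<close>] by simp
  next
    fix p assume "p \<in> {p. p permutes J}"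
    then have p: "p permutes J" by simp
    show "map_permutation I e' (map_permutation J e p) = p"
      by (rule map_permutation_compose_inv[OF e p e'_e])
    show "map_permutation J e p \<in> {\<pi>. \<pi> permutes I}"
      using map_permutation_permutes[OF e p] by simp
  qed
qed

lemma leibniz_det_eq_det_mat:
  assumes e: "bij_betw e {..<n} I"
  shows "leibniz_det I M = det (mat n n (\<lambda>(i, j). M (e i) (e j)))"
proof -
  have "leibniz_det I M = leibniz_det {..<n} (\<lambda>i j. M (e i) (e j))"
    using leibniz_det_reindex[OF e] by simp
  also have "\<dots> = det (mat n n (\<lambda>(i, j). M (e i) (e j)))"
    unfolding det_def'[OF mat_carrier] leibniz_det_def
    by (auto simp: atLeast0LessThan permutes_in_image intro!: sum.cong prod.cong)
  finally show ?thesis .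
qed

lemma obtain_bij_betw_lessThan:
  assumes "finite I"
  obtains e where "bij_betw e {..<card I} I"
  using ex_bij_betw_nat_finite[OF assms] by (auto simp: atLeast0LessThan)

lemma leibniz_det_transpose:
  assumes "finite I"
  shows "leibniz_det I (\<lambda>k l. M l k) = leibniz_det I M"
proof -
  obtain e where e: "bij_betw e {..<card I} I" using obtain_bij_betw_lessThan[OF assms] .
  have "mat (card I) (card I) (\<lambda>(i, j). M (e j) (e i)) =
      transpose_mat (mat (card I) (card I) (\<lambda>(i, j). M (e i) (e j)))"
    by (intro eq_matI) auto
  then show ?thesis
    unfolding leibniz_det_eq_det_mat[OF e] by (simp add: det_transpose[OF mat_carrier])
qed

lemma torus_kernel_reindex_subset:
  assumes e: "bij_betw e J I"
  shows "(\<lambda>y j. if j \<in> J then y (e j) else 0) ` torus_kernel I K \<subseteq> torus_kernel J (\<lambda>i j. K (e i) (e j))"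
proof clarify
  fix y assume y: "y \<in> torus_kernel I K"
  have eJ: "e j \<in> I" if "j \<in> J" for j using e that by (meson bij_betwE)
  have "(\<Sum>k\<in>J. of_int (K (e l) (e k)) * (if k \<in> J then y (e k) else 0)) \<in> \<int>" if "l \<in> J" for l
  proof -
    have "(\<Sum>k\<in>J. of_int (K (e l) (e k)) * (if k \<in> J then y (e k) else 0)) = (\<Sum>i\<in>I. of_int (K (e l) i) * y i)"
      using sum.reindex_bij_betw[OF e, of "\<lambda>i. of_int (K (e l) i) * y i"] by simp
    also have "\<dots> \<in> \<int>" using y eJ[OF that] unfolding torus_kernel_def by blast
    finally show ?thesis .
  qed
  then show "(\<lambda>j. if j \<in> J then y (e j) else 0) \<in> torus_kernel J (\<lambda>i j. K (e i) (e j))"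
    using y eJ unfolding torus_kernel_def by auto
qed

lemma bij_betw_torus_kernel_reindex:
  assumes e: "bij_betw e J I"
  shows "bij_betw (\<lambda>y j. if j \<in> J then y (e j) else 0) (torus_kernel I K)
           (torus_kernel J (\<lambda>i j. K (e i) (e j)))"
proof -
  define e' where "e' = inv_into J e"
  have e': "bij_betw e' I J" unfolding e'_def using e by (rule bij_betw_inv_into)
  have e'_e: "e' (e j) = j" if "j \<in> J" for j
    using e that unfolding e'_def by (meson bij_betw_inv_into_left)
  have e_e': "e (e' i) = i" if "i \<in> I" for i
    using e that unfolding e'_def by (meson bij_betw_inv_into_right)
  have eJ: "e j \<in> I" if "j \<in> J" for j using e that by (meson bij_betwE)
  have e'I: "e' i \<in> J" if "i \<in> I" for i using e' that by (meson bij_betwE)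
  have "torus_kernel I (\<lambda>i j. K (e (e' i)) (e (e' j))) = torus_kernel I K"
    by (rule torus_kernel_cong) (simp add: e_e')
  then have inverse_subset: "(\<lambda>z i. if i \<in> I then z (e' i) else 0) ` torus_kernel J (\<lambda>i j. K (e i) (e j))
      \<subseteq> torus_kernel I K"
    using torus_kernel_reindex_subset[OF e', of "\<lambda>i j. K (e i) (e j)"] by simp
  show ?thesis
    by (rule bij_betw_byWitness[OF _ _ torus_kernel_reindex_subset[OF e] inverse_subset])
      (use e'I e_e' eJ e'_e in \<open>auto simp: torus_kernel_def fun_eq_iff\<close>)
qed

lemma card_torus_kernel:
  assumes "finite I"
  shows "(finite (torus_kernel I K) \<longleftrightarrow> leibniz_det I K \<noteq> 0)
       \<and> card (torus_kernel I K) = nat \<bar>leibniz_det I K\<bar>"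
proof -
  obtain e where e: "bij_betw e {..<card I} I" using obtain_bij_betw_lessThan[OF assms] .
  define A where "A = mat (card I) (card I) (\<lambda>(i, j). K (e i) (e j))"
  have "torus_kernel {..<card I} (\<lambda>i j. K (e i) (e j)) = mat_torus_kernel (card I) A"
    unfolding A_def by (rule torus_kernel_cong) simp
  then have bij: "bij_betw (\<lambda>y j. if j \<in> {..<card I} then y (e j) else 0) (torus_kernel I K)
      (mat_torus_kernel (card I) A)"
    using bij_betw_torus_kernel_reindex[OF e, of K] by (simp only:)
  have "leibniz_det I K = det A"
    unfolding A_def by (rule leibniz_det_eq_det_mat[OF e])
  moreover have "A \<in> carrier_mat (card I) (card I)" unfolding A_def by simp
  ultimately show ?thesis
    using mat_torus_kernel_card[of A "card I"] bij_betw_finite[OF bij] bij_betw_same_card[OF bij]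
    by simp
qed

lemma bij_betw_mult_mat_vec_iff:
  fixes A :: "'a::field mat"
  assumes A: "A \<in> carrier_mat n n"
  shows "bij_betw ((*\<^sub>v) A) (carrier_vec n) (carrier_vec n) \<longleftrightarrow> det A \<noteq> 0"
proof
  assume bij: "bij_betw ((*\<^sub>v) A) (carrier_vec n) (carrier_vec n)"
  show "det A \<noteq> 0"
  proof
    assume "det A = 0"
    then obtain u where "u \<in> carrier_vec n" "u \<noteq> 0\<^sub>v n" "A *\<^sub>v u = 0\<^sub>v n"
      using det_0_iff_vec_prod_zero[OF A] by blast
    moreover have "A *\<^sub>v 0\<^sub>v n = 0\<^sub>v n" using A by (intro eq_vecI) auto
    ultimately show False
      using bij zero_carrier_vec unfolding bij_betw_def inj_on_def by metis
  qed
next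
  assume "det A \<noteq> 0"
  then obtain B where B: "B \<in> carrier_mat n n" "B * A = 1\<^sub>m n" "A * B = 1\<^sub>m n"
    using det_non_zero_imp_unit[OF A, of "()"] unfolding Units_def ring_mat_def by auto
  show "bij_betw ((*\<^sub>v) A) (carrier_vec n) (carrier_vec n)"
    by (rule bij_betw_byWitness[where f' = "(*\<^sub>v) B"])
      (use A B in \<open>auto simp flip: assoc_mult_mat_vec\<close>)
qed

definition matrix_action :: "'i set \<Rightarrow> ('i \<Rightarrow> 'i \<Rightarrow> 'a::comm_ring_1) \<Rightarrow> ('i \<Rightarrow> 'a) \<Rightarrow> 'i \<Rightarrow> 'a" where
  "matrix_action I K v l = (if l \<in> I then \<Sum>k\<in>I. K l k * v k else 0)"

lemma lin_det_matrix_action: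
  assumes "finite I"
  shows "lin_det I (matrix_action I K) = leibniz_det I K"
proof -
  have "lin_det I (matrix_action I K) = leibniz_det I (\<lambda>k l. K l k)"
    unfolding lin_det_def
    by (rule leibniz_det_cong) (simp add: matrix_action_def assms if_distrib cong: if_cong)
  then show ?thesis using leibniz_det_transpose[OF assms] by simp
qed

lemma bij_betw_matrix_action_iff:
  fixes K :: "'i \<Rightarrow> 'i \<Rightarrow> 'a::field"
  assumes "finite I"
  shows "bij_betw (matrix_action I K) {v. \<forall>k. k \<notin> I \<longrightarrow> v k = 0} {v. \<forall>k. k \<notin> I \<longrightarrow> v k = 0}
    \<longleftrightarrow> leibniz_det I K \<noteq> 0"
proof -
  define V where "V = {v::'i \<Rightarrow> 'a. \<forall>k. k \<notin> I \<longrightarrow> v k = 0}"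
  define n where "n = card I"
  obtain e where e: "bij_betw e {..<n} I" using obtain_bij_betw_lessThan[OF assms] unfolding n_def .
  define e' where "e' = inv_into {..<n} e"
  have e_e': "e (e' i) = i" if "i \<in> I" for i
    using e that unfolding e'_def by (meson bij_betw_inv_into_right)
  have e'_e: "e' (e j) = j" if "j < n" for j
    using e that unfolding e'_def by (meson bij_betw_inv_into_left lessThan_iff)
  have eI: "e j \<in> I" if "j < n" for j using e that by (meson bij_betwE lessThan_iff)
  have e'I: "e' i < n" if "i \<in> I" for i
    using bij_betw_inv_into[OF e] that unfolding e'_def by (meson bij_betwE lessThan_iff)
  define coords where "coords = (\<lambda>v::'i \<Rightarrow> 'a. vec n (\<lambda>j. v (e j)))"
  define A where "A = mat n n (\<lambda>(i, j). K (e i) (e j))"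
  have A: "A \<in> carrier_mat n n" unfolding A_def by simp
  have coords: "bij_betw coords V (carrier_vec n)"
    by (rule bij_betw_byWitness[where f' = "\<lambda>w i. if i \<in> I then w $ e' i else 0"])
      (auto simp: V_def coords_def fun_eq_iff e_e' e'_e eI e'I)
  have coords_action: "coords (matrix_action I K v) = A *\<^sub>v coords v" for v
  proof (rule eq_vecI)
    fix j assume "j < dim_vec (A *\<^sub>v coords v)"
    then have j: "j < n" using A by simp
    have "(\<Sum>k\<in>I. K (e j) k * v k) = (\<Sum>i<n. K (e j) (e i) * v (e i))"
      using sum.reindex_bij_betw[OF e, of "\<lambda>k. K (e j) k * v k"] by simp
    then show "coords (matrix_action I K v) $ j = (A *\<^sub>v coords v) $ j"
      using j eI unfolding coords_def A_def matrix_action_def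
      by (simp add: scalar_prod_def atLeast0LessThan)
  qed (use A in \<open>simp add: coords_def\<close>)
  have "matrix_action I K ` V \<subseteq> V" unfolding V_def matrix_action_def by auto
  then have "bij_betw (matrix_action I K) V V \<longleftrightarrow> bij_betw (coords \<circ> matrix_action I K) V (carrier_vec n)"
    by (rule bij_betw_comp_iff2[OF coords])
  also have "\<dots> \<longleftrightarrow> bij_betw ((*\<^sub>v) A \<circ> coords) V (carrier_vec n)"
    by (rule bij_betw_cong) (simp add: coords_action)
  also have "\<dots> \<longleftrightarrow> bij_betw ((*\<^sub>v) A) (carrier_vec n) (carrier_vec n)"
    by (rule bij_betw_comp_iff[OF coords, symmetric])
  also have "\<dots> \<longleftrightarrow> leibniz_det I K \<noteq> 0"
    using bij_betw_mult_mat_vec_iff[OF A] leibniz_det_eq_det_mat[OF e, of K] unfolding A_def by simp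
  finally show ?thesis unfolding V_def .
qed

section \<open>Passing to the finite quotient\<close>

definition ftilde_mat :: "('g, 'b) monoid_scheme \<Rightarrow> 'g set \<Rightarrow> nat \<Rightarrow> ('g \<Rightarrow> nat \<Rightarrow> nat \<Rightarrow> int)
    \<Rightarrow> 'g set \<times> nat \<Rightarrow> 'g set \<times> nat \<Rightarrow> int" where
  "ftilde_mat G N r a l k = ftilde G r a (inv\<^bsub>G Mod N\<^esub> (fst l) \<otimes>\<^bsub>G Mod N\<^esub> fst k) (snd l) (snd k)"

definition coset_lift :: "('g, 'b) monoid_scheme \<Rightarrow> 'g set \<Rightarrow> nat \<Rightarrow> ('g set \<times> nat \<Rightarrow> real)
    \<Rightarrow> 'g \<Rightarrow> nat \<Rightarrow> real" where
  "coset_lift G N r y \<gamma> j = (if \<gamma> \<in> carrier G \<and> j < r then y (N #>\<^bsub>G\<^esub> \<gamma>, j) else 0)"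

lemma rho_ftilde_eq_matrix_action:
  fixes G :: "('g, 'b) monoid_scheme"
  shows "rho G N r (ftilde G r a) =
     matrix_action (carrier (G Mod N) \<times> {..<r}) (\<lambda>l k. of_int (ftilde_mat G N r a l k))"
proof (intro ext, clarify)
  fix v :: "'g set \<times> nat \<Rightarrow> rat" and m i
  have "(\<Sum>j<r. \<Sum>g\<in>carrier (G Mod N). v (g, j) * of_int (ftilde G r a (inv\<^bsub>G Mod N\<^esub> m \<otimes>\<^bsub>G Mod N\<^esub> g) i j))
      = (\<Sum>g\<in>carrier (G Mod N). \<Sum>j<r. of_int (ftilde G r a (inv\<^bsub>G Mod N\<^esub> m \<otimes>\<^bsub>G Mod N\<^esub> g) i j) * v (g, j))"
    by (subst sum.swap) (rule sum.cong[OF refl], rule sum.cong[OF refl], rule mult.commute)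
  then show "rho G N r (ftilde G r a) v (m, i) =
      matrix_action (carrier (G Mod N) \<times> {..<r}) (\<lambda>l k. of_int (ftilde_mat G N r a l k)) v (m, i)"
    unfolding rho_def matrix_action_def ftilde_mat_def by (simp add: sum.cartesian_product case_prod_unfold)
qed

context normal
begin

lemma FactGroup_carrierE:
  assumes "c \<in> carrier (G Mod H)"
  obtains \<gamma> where "\<gamma> \<in> carrier G" "c = H #> \<gamma>"
  using assms unfolding carrier_FactGroup by blast

lemma r_coset_in_FactGroup:
  assumes "\<gamma> \<in> carrier G"
  shows "H #> \<gamma> \<in> carrier (G Mod H)"
  using assms unfolding carrier_FactGroup by blast

lemma mem_coset_iff:
  assumes c: "c \<in> carrier (G Mod H)" and \<delta>: "\<delta> \<in> carrier G"
  shows "\<delta> \<in> c \<longleftrightarrow> H #> \<delta> = c"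
proof -
  obtain \<beta> where "\<beta> \<in> carrier G" "c = H #> \<beta>" using FactGroup_carrierE[OF c] .
  then show ?thesis
    using repr_independence[of \<delta> H \<beta>] rcos_self[OF \<delta> subgroup_axioms] subgroup_axioms by auto
qed

lemma mem_inv_coset_mult_iff:
  assumes g: "g \<in> carrier (G Mod H)" and \<gamma>: "\<gamma> \<in> carrier G" and \<delta>: "\<delta> \<in> carrier G"
  shows "\<delta> \<in> inv\<^bsub>G Mod H\<^esub> (H #> \<gamma>) \<otimes>\<^bsub>G Mod H\<^esub> g \<longleftrightarrow> H #> (\<gamma> \<otimes> \<delta>) = g"
proof -
  interpret Q: group "G Mod H" by (rule factorgroup_is_group)
  have cosets: "H #> \<gamma> \<in> carrier (G Mod H)" "H #> \<delta> \<in> carrier (G Mod H)"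
    using \<gamma> \<delta> by (simp_all add: r_coset_in_FactGroup)
  have "\<delta> \<in> inv\<^bsub>G Mod H\<^esub> (H #> \<gamma>) \<otimes>\<^bsub>G Mod H\<^esub> g \<longleftrightarrow> H #> \<delta> = inv\<^bsub>G Mod H\<^esub> (H #> \<gamma>) \<otimes>\<^bsub>G Mod H\<^esub> g"
    using mem_coset_iff[OF Q.m_closed[OF Q.inv_closed[OF cosets(1)] g] \<delta>] .
  also have "\<dots> \<longleftrightarrow> (H #> \<gamma>) \<otimes>\<^bsub>G Mod H\<^esub> (H #> \<delta>) = g"
    using Q.inv_solve_left cosets g by blast
  also have "(H #> \<gamma>) \<otimes>\<^bsub>G Mod H\<^esub> (H #> \<delta>) = H #> (\<gamma> \<otimes> \<delta>)"
    using r_coset_hom_Mod \<gamma> \<delta> by (simp add: hom_mult)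
  finally show ?thesis by auto
qed

lemma X_f_sum_coset_lift:
  assumes finF: "finite (fsupp G r a)" and finQ: "finite (carrier (G Mod H))"
    and \<gamma>: "\<gamma> \<in> carrier G" and i: "i < r"
  shows "(\<Sum>\<gamma>' \<in> {\<gamma>' \<in> carrier G. inv \<gamma> \<otimes> \<gamma>' \<in> fsupp G r a}.
           \<Sum>j<r. coset_lift G H r y \<gamma>' j * of_int (a (inv \<gamma> \<otimes> \<gamma>') i j))
       = (\<Sum>k \<in> carrier (G Mod H) \<times> {..<r}. of_int (ftilde_mat G H r a (H #> \<gamma>, i) k) * y k)"
proof -
  define F where "F = fsupp G r a"
  have F: "F \<subseteq> carrier G" unfolding F_def fsupp_def by auto
  have "(\<Sum>\<gamma>' \<in> {\<gamma>' \<in> carrier G. inv \<gamma> \<otimes> \<gamma>' \<in> F}.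
           \<Sum>j<r. coset_lift G H r y \<gamma>' j * of_int (a (inv \<gamma> \<otimes> \<gamma>') i j))
     = (\<Sum>\<delta>\<in>F. \<Sum>j<r. y (H #> (\<gamma> \<otimes> \<delta>), j) * of_int (a \<delta> i j))"
    using \<gamma> F
    by (intro sum.reindex_bij_witness[where i = "\<lambda>\<delta>. \<gamma> \<otimes> \<delta>" and j = "\<lambda>\<gamma>'. inv \<gamma> \<otimes> \<gamma>'"])
      (auto simp: coset_lift_def m_assoc[symmetric] intro!: sum.cong)
  also have "\<dots> = (\<Sum>g\<in>carrier (G Mod H). \<Sum>\<delta>\<in>{\<delta>\<in>F. H #> (\<gamma> \<otimes> \<delta>) = g}.
                      \<Sum>j<r. y (H #> (\<gamma> \<otimes> \<delta>), j) * of_int (a \<delta> i j))"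
  proof (rule sum.group[symmetric])
    show "finite F" "finite (carrier (G Mod H))" using finF finQ unfolding F_def by simp_all
    show "(\<lambda>\<delta>. H #> (\<gamma> \<otimes> \<delta>)) ` F \<subseteq> carrier (G Mod H)"
      using \<gamma> F by (auto intro: r_coset_in_FactGroup)
  qed
  also have "\<dots> = (\<Sum>g\<in>carrier (G Mod H). \<Sum>\<delta>\<in>{\<delta>\<in>F. H #> (\<gamma> \<otimes> \<delta>) = g}.
                      \<Sum>j<r. y (g, j) * of_int (a \<delta> i j))"
    by (intro sum.cong) auto
  also have "\<dots> = (\<Sum>g\<in>carrier (G Mod H). \<Sum>j<r. of_int (ftilde_mat G H r a (H #> \<gamma>, i) (g, j)) * y (g, j))"
  proof (rule sum.cong[OF refl])
    fix g assume g: "g \<in> carrier (G Mod H)"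
    have "(inv\<^bsub>G Mod H\<^esub> (H #> \<gamma>) \<otimes>\<^bsub>G Mod H\<^esub> g) \<inter> F = {\<delta>\<in>F. H #> (\<gamma> \<otimes> \<delta>) = g}"
      using mem_inv_coset_mult_iff[OF g \<gamma>] F by blast
    then show "(\<Sum>\<delta>\<in>{\<delta>\<in>F. H #> (\<gamma> \<otimes> \<delta>) = g}. \<Sum>j<r. y (g, j) * of_int (a \<delta> i j))
        = (\<Sum>j<r. of_int (ftilde_mat G H r a (H #> \<gamma>, i) (g, j)) * y (g, j))"
      unfolding ftilde_mat_def ftilde_def F_def
      by (subst sum.swap) (simp add: of_int_sum sum_distrib_left sum_distrib_right mult.commute)
  qed
  also have "\<dots> = (\<Sum>k \<in> carrier (G Mod H) \<times> {..<r}. of_int (ftilde_mat G H r a (H #> \<gamma>, i) k) * y k)"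
    by (simp add: sum.cartesian_product case_prod_unfold)
  finally show ?thesis unfolding F_def .
qed

lemma carrier_FactGroup_times_eq:
  "carrier (G Mod H) \<times> {..<r} = {(H #> \<gamma>, i) | \<gamma> i. \<gamma> \<in> carrier G \<and> i < r}"
  unfolding carrier_FactGroup by blast

lemma coset_lift_mem_Fix_N_iff:
  assumes finF: "finite (fsupp G r a)" and finQ: "finite (carrier (G Mod H))"
    and y: "\<forall>k\<in>carrier (G Mod H) \<times> {..<r}. 0 \<le> y k \<and> y k < 1"
  shows "coset_lift G H r y \<in> Fix_N G H r a \<longleftrightarrow>
    (\<forall>l\<in>carrier (G Mod H) \<times> {..<r}.
       (\<Sum>k\<in>carrier (G Mod H) \<times> {..<r}. of_int (ftilde_mat G H r a l k) * y k) \<in> \<int>)"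
proof -
  have range: "\<forall>\<gamma> i. \<gamma> \<in> carrier G \<and> i < r \<longrightarrow> coset_lift G H r y \<gamma> i \<in> {0..<1}"
    using y r_coset_in_FactGroup unfolding coset_lift_def by auto
  have invariant: "coset_lift G H r y (inv n \<otimes> \<gamma>) = coset_lift G H r y \<gamma>"
    if n: "n \<in> H" and \<gamma>: "\<gamma> \<in> carrier G" for n \<gamma>
  proof -
    have "inv n \<otimes> \<gamma> \<in> H #> \<gamma>" using n \<gamma> by (simp add: rcosI subset)
    then have "H #> (inv n \<otimes> \<gamma>) = H #> \<gamma>"
      using repr_independence \<gamma> subgroup_axioms by auto
    then show ?thesis using n \<gamma> unfolding coset_lift_def by (auto simp: fun_eq_iff mem_carrier)
  qed
  have zero: "\<forall>\<gamma> i. \<not> (\<gamma> \<in> carrier G \<and> i < r) \<longrightarrow> coset_lift G H r y \<gamma> i = 0"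
    by (simp add: coset_lift_def)
  have "coset_lift G H r y \<in> Fix_N G H r a \<longleftrightarrow>
      (\<forall>\<gamma>\<in>carrier G. \<forall>i<r. (\<Sum>\<gamma>' \<in> {\<gamma>' \<in> carrier G. inv \<gamma> \<otimes> \<gamma>' \<in> fsupp G r a}.
           \<Sum>j<r. coset_lift G H r y \<gamma>' j * of_int (a (inv \<gamma> \<otimes> \<gamma>') i j)) \<in> \<int>)"
    unfolding Fix_N_def X_f_def using range zero invariant by blast
  also have "\<dots> \<longleftrightarrow> (\<forall>\<gamma>\<in>carrier G. \<forall>i<r.
      (\<Sum>k\<in>carrier (G Mod H) \<times> {..<r}. of_int (ftilde_mat G H r a (H #> \<gamma>, i) k) * y k) \<in> \<int>)"
    by (simp add: X_f_sum_coset_lift[OF finF finQ])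
  also have "\<dots> \<longleftrightarrow> (\<forall>l\<in>carrier (G Mod H) \<times> {..<r}.
       (\<Sum>k\<in>carrier (G Mod H) \<times> {..<r}. of_int (ftilde_mat G H r a l k) * y k) \<in> \<int>)"
    unfolding carrier_FactGroup_times_eq[of r] by blast
  finally show ?thesis .
qed

lemma Fix_N_coset_invariant:
  assumes x: "x \<in> Fix_N G H r a" and "\<gamma> \<in> carrier G" "\<delta> \<in> carrier G" and "H #> \<gamma> = H #> \<delta>"
  shows "x \<gamma> = x \<delta>"
proof -
  have "\<delta> \<in> H #> \<gamma>" using assms rcos_self subgroup_axioms by metis
  then obtain n where n: "n \<in> H" and \<delta>_eq: "\<delta> = n \<otimes> \<gamma>" unfolding r_coset_def by blast
  have "x (inv (inv n) \<otimes> \<gamma>) = x \<gamma>"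
    using x m_inv_closed[OF n] \<open>\<gamma> \<in> carrier G\<close> unfolding Fix_N_def by blast
  then show ?thesis using n \<delta>_eq by (simp add: mem_carrier)
qed

lemma Fix_N_coset_liftE:
  assumes x: "x \<in> Fix_N G H r a"
  obtains y where "\<forall>k\<in>carrier (G Mod H) \<times> {..<r}. 0 \<le> y k \<and> y k < 1"
    and "\<forall>k. k \<notin> carrier (G Mod H) \<times> {..<r} \<longrightarrow> y k = 0" and "coset_lift G H r y = x"
proof -
  have x_X: "x \<in> X_f G r a" using x unfolding Fix_N_def by simp
  have x_range: "0 \<le> x \<gamma> j \<and> x \<gamma> j < 1" if "\<gamma> \<in> carrier G" "j < r" for \<gamma> j
    using x_X that unfolding X_f_def by fastforce
  have x_zero: "x \<gamma> j = 0" if "\<not> (\<gamma> \<in> carrier G \<and> j < r)" for \<gamma> j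
    using x_X that unfolding X_f_def by blast
  define rep where "rep c = (SOME \<gamma>. \<gamma> \<in> carrier G \<and> c = H #> \<gamma>)" for c
  have rep: "rep c \<in> carrier G" "H #> rep c = c" if c: "c \<in> carrier (G Mod H)" for c
  proof -
    obtain \<gamma> where "\<gamma> \<in> carrier G" "c = H #> \<gamma>" using FactGroup_carrierE[OF c] .
    then have "\<exists>\<gamma>. \<gamma> \<in> carrier G \<and> c = H #> \<gamma>" by blast
    from someI_ex[OF this] show "rep c \<in> carrier G" "H #> rep c = c" unfolding rep_def by simp_all
  qed
  define y where "y k = (if k \<in> carrier (G Mod H) \<times> {..<r} then x (rep (fst k)) (snd k) else 0)" for k
  have "coset_lift G H r y = x"
  proof (intro ext)
    fix \<gamma> j
    show "coset_lift G H r y \<gamma> j = x \<gamma> j"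
    proof (cases "\<gamma> \<in> carrier G \<and> j < r")
      case True
      then have c: "H #> \<gamma> \<in> carrier (G Mod H)" by (simp add: r_coset_in_FactGroup)
      have "x (rep (H #> \<gamma>)) = x \<gamma>"
        using Fix_N_coset_invariant[OF x rep(1)[OF c]] rep(2)[OF c] True by simp
      then show ?thesis using True c unfolding coset_lift_def y_def by simp
    next
      case False
      then show ?thesis using x_zero[OF False] unfolding coset_lift_def by auto
    qed
  qed
  moreover have "\<forall>k\<in>carrier (G Mod H) \<times> {..<r}. 0 \<le> y k \<and> y k < 1"
    using rep(1) x_range unfolding y_def by auto
  moreover have "\<forall>k. k \<notin> carrier (G Mod H) \<times> {..<r} \<longrightarrow> y k = 0" unfolding y_def by simp
  ultimately show ?thesis using that by blast
qed

lemma bij_betw_coset_lift_Fix_N: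
  assumes finF: "finite (fsupp G r a)" and finQ: "finite (carrier (G Mod H))"
  shows "bij_betw (coset_lift G H r) (torus_kernel (carrier (G Mod H) \<times> {..<r}) (ftilde_mat G H r a))
           (Fix_N G H r a)"
proof (rule bij_betw_imageI)
  define I where "I = carrier (G Mod H) \<times> {..<r}"
  define K where "K = ftilde_mat G H r a"
  note lift_iff = coset_lift_mem_Fix_N_iff[OF finF finQ, folded I_def K_def]
  show "inj_on (coset_lift G H r) (torus_kernel I K)"
  proof (rule inj_onI, rule ext)
    fix y y' k assume y: "y \<in> torus_kernel I K" and y': "y' \<in> torus_kernel I K"
      and eq: "coset_lift G H r y = coset_lift G H r y'"
    show "y k = y' k"
    proof (cases "k \<in> I")
      case True
      then obtain \<gamma> j where "\<gamma> \<in> carrier G" "j < r" "k = (H #> \<gamma>, j)"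
        unfolding I_def carrier_FactGroup_times_eq by blast
      then show ?thesis using fun_cong[OF fun_cong[OF eq, of \<gamma>], of j] by (simp add: coset_lift_def)
    next
      case False
      then have "y k = 0" "y' k = 0" using y y' unfolding torus_kernel_def by blast+
      then show ?thesis by simp
    qed
  qed
  show "coset_lift G H r ` torus_kernel I K = Fix_N G H r a"
  proof (intro equalityI subsetI)
    fix x assume "x \<in> coset_lift G H r ` torus_kernel I K"
    then obtain y where y: "y \<in> torus_kernel I K" and x: "x = coset_lift G H r y" by blast
    have "\<forall>k\<in>I. 0 \<le> y k \<and> y k < 1" "\<forall>l\<in>I. (\<Sum>k\<in>I. of_int (K l k) * y k) \<in> \<int>"
      using y unfolding torus_kernel_def by blast+
    then show "x \<in> Fix_N G H r a" using lift_iff x by simp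
  next
    fix x assume x: "x \<in> Fix_N G H r a"
    then obtain y where y_range: "\<forall>k\<in>I. 0 \<le> y k \<and> y k < 1"
      and y_zero: "\<forall>k. k \<notin> I \<longrightarrow> y k = 0" and lift: "coset_lift G H r y = x"
      unfolding I_def by (rule Fix_N_coset_liftE)
    have "\<forall>l\<in>I. (\<Sum>k\<in>I. of_int (K l k) * y k) \<in> \<int>"
      using lift_iff[OF y_range] lift x by simp
    then have "y \<in> torus_kernel I K" using y_range y_zero unfolding torus_kernel_def by blast
    then show "x \<in> coset_lift G H r ` torus_kernel I K" using lift by blast
  qed
qed

end

theorem proposition2p1:
  fixes G :: "('g, 'b) monoid_scheme" and N :: "'g set" and r :: nat
    and a :: "'g \<Rightarrow> nat \<Rightarrow> nat \<Rightarrow> int"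
  assumes "group G"
    and "N \<lhd> G"
    and "finite (carrier (G Mod N))"
    and "r \<ge> 1"
    and "finite (fsupp G r a)"
  shows "(bij_betw (rho G N r (ftilde G r a)) (QGr G N r) (QGr G N r)
           \<longleftrightarrow> finite (Fix_N G N r a))
       \<and> (finite (Fix_N G N r a) \<longrightarrow>
           of_nat (card (Fix_N G N r a)) = lin_det (carrier (G Mod N) \<times> {..<r}) (rho G N r (ftilde G r a))
         \<or> of_nat (card (Fix_N G N r a)) = - lin_det (carrier (G Mod N) \<times> {..<r}) (rho G N r (ftilde G r a)))"
proof -
  interpret normal N G by (rule assms(2))
  define I where "I = carrier (G Mod N) \<times> {..<r}"
  define K where "K = ftilde_mat G N r a"
  have I: "finite I" using assms(3) unfolding I_def by simp
  have rho: "rho G N r (ftilde G r a) = matrix_action I (\<lambda>l k. of_int (K l k))"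
    unfolding I_def K_def by (rule rho_ftilde_eq_matrix_action)
  have det: "leibniz_det I (\<lambda>l k. of_int (K l k)) = (of_int (leibniz_det I K) :: rat)"
    unfolding leibniz_det_def by simp
  have Fix: "bij_betw (coset_lift G N r) (torus_kernel I K) (Fix_N G N r a)"
    unfolding I_def K_def by (rule bij_betw_coset_lift_Fix_N[OF assms(5,3)])
  have "finite (Fix_N G N r a) \<longleftrightarrow> leibniz_det I K \<noteq> 0"
    and "card (Fix_N G N r a) = nat \<bar>leibniz_det I K\<bar>"
    using card_torus_kernel[OF I, of K] bij_betw_finite[OF Fix] bij_betw_same_card[OF Fix] by auto
  moreover have "bij_betw (rho G N r (ftilde G r a)) (QGr G N r) (QGr G N r) \<longleftrightarrow> leibniz_det I K \<noteq> 0"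
    unfolding rho QGr_def I_def[symmetric] bij_betw_matrix_action_iff[OF I] det by simp
  moreover have "lin_det I (rho G N r (ftilde G r a)) = of_int (leibniz_det I K)"
    unfolding rho lin_det_matrix_action[OF I] det ..
  ultimately show ?thesis
    unfolding I_def[symmetric] by (cases "leibniz_det I K \<ge> 0") auto
qed

end
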